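(* Let $\widehat{T}(n)=\max_{w\in\mathcal{W}_n}\mathbb{E}(T\mid w_0=w)$ denote the worst expected convergence time of the cooling process on configurations of length $n$. Then $\widehat{T}(n)=O(n^3)$.
   Context: A configuration of length $n$ is a word $w=w_1\cdots w_n$ over the alphabet $\{1,2\}$ with $|w|_1=|w|_2$ (as many letters $1$ as letters $2$); $\mathcal{W}_n$ denotes the set of configurations of length $n$. A flip at position $1\le i<n$ on $w$ exchanges $w_i$ and $w_{i+1}$, provided $w_i\ne w_{i+1}$. The configuration $w$ has a mismatch at position $i$ if $w_i=w_{i+1}$; $E(w)$ denotes the total number of mismatches of $w$. The cooling process is the Markov chain $(w_t)_{t\ge0}$ on $\mathcal{W}_n$ started at $w_0$ and defined by $w_{t+1}=w_t$ if $E(w_t)=0$, and otherwise $w_{t+1}$ is obtained from $w_t$ by performing a flip chosen uniformly at random among the flips on $w_t$ that do not increase the number of mismatches (i.e. flips producing $w'$ with $E(w')\le E(w_t)$). The convergence time is $T=\min\{t\ge0 : E(w_t)=0\}$. *)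

theory Defs
  imports "HOL-Probability.Probability"
begin

text \<open>Configurations are lists over the alphabet {1,2} (encoded as naturals),
  positions are 0-indexed: position i of the list is letter w_(i+1) of the paper.\<close>

definition configs :: "nat \<Rightarrow> nat list set" where
  "configs n = {w. length w = n \<and> set w \<subseteq> {1,2} \<and>
                   count_list w 1 = count_list w 2}"

definition mismatches :: "nat list \<Rightarrow> nat" where
  "mismatches w = card {i. Suc i < length w \<and> w ! i = w ! Suc i}"

definition flip :: "nat list \<Rightarrow> nat \<Rightarrow> nat list" where
  "flip w i = w[i := w ! Suc i, Suc i := w ! i]"

definition allowed_flips :: "nat list \<Rightarrow> nat set" where
  "allowed_flips w = {i. Suc i < length w \<and> w ! i \<noteq> w ! Suc i \<and>
                         mismatches (flip w i) \<le> mismatches w}"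

definition cool_step :: "nat list \<Rightarrow> nat list pmf" where
  "cool_step w = (if mismatches w = 0 then return_pmf w
                  else map_pmf (flip w) (pmf_of_set (allowed_flips w)))"

fun traj :: "nat \<Rightarrow> nat list \<Rightarrow> nat list list pmf" where
  "traj 0 w = return_pmf [w]"
| "traj (Suc t) w = bind_pmf (traj t w) (\<lambda>p. map_pmf (\<lambda>v. p @ [v]) (cool_step (last p)))"

text \<open>P(T > t | w_0 = w): all of w_0, ..., w_t have a mismatch.\<close>
definition surv :: "nat list \<Rightarrow> nat \<Rightarrow> real" where
  "surv w t = measure_pmf.prob (traj t w) {p. \<forall>v\<in>set p. mismatches v \<noteq> 0}"

text \<open>E(T | w_0 = w) = sum over t of P(T > t), as an extended nonnegative real
  (possibly infinite).\<close>
definition exp_conv_time :: "nat list \<Rightarrow> ennreal" where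
  "exp_conv_time w = (\<Sum>t. ennreal (surv w t))"

end

theory Submission
  imports Defs
begin

text \<open>Call a mismatch a wall. A flip that does not increase the number of mismatches either moves
  a wall by two positions or destroys walls. Give a wall at position k the weight 2n^2 + q(k), where
  q is one of the quadratics -k^2, k(n - k), -(n - k)^2 according to the sign of the height of the
  +-1 walk of the word just before the wall, measured relative to the wall's letter. The sum of the
  weights lies between 0 and 3n^3. Moving a wall changes its weight by a term linear in its position,
  and these terms telescope along runs of adjacent walls; what is left at the ends of runs is paid
  for by the wall-destroying flips, each of which lowers the potential by at least n^2 - O(n). So
  for n \<ge> 9 the allowed flips lower the potential by at least 4 on average, and a drift argument
  gives E(T) \<le> 3n^3/4.\<close>

definition spin :: "nat \<Rightarrow> int" where "spin x = (if x = 1 then 1 else -1)"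

definition height :: "nat list \<Rightarrow> nat \<Rightarrow> int" where "height w k = (\<Sum>j<k. spin (w!j))"

text \<open>wall w k is the mismatch at position k - 1: walls are indexed by the right letter of the
  equal pair, so that a flip at i can only change the walls at i and i + 2.\<close>
definition wall :: "nat list \<Rightarrow> nat \<Rightarrow> bool" where
  "wall w k \<longleftrightarrow> 0 < k \<and> k < length w \<and> w!(k-1) = w!k"

lemma length_flip[simp]: "length (flip w i) = length w"
  by (simp add: flip_def)

lemma nth_flip:
  assumes "Suc i < length w"
  shows "flip w i ! j = (if j = i then w!Suc i else if j = Suc i then w!i else w!j)"
  using assms by (auto simp: flip_def nth_list_update)

lemma flip_in_configs:
  assumes "w \<in> configs n" "Suc i < length w"
  shows "flip w i \<in> configs n"
proof -
  have m: "mset (flip w i) = mset w"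
    unfolding flip_def using assms(2) by (intro mset_swap) auto
  then have "set (flip w i) = set w" by (metis set_mset_mset)
  moreover have "count_list (flip w i) x = count_list w x" for x
    using m by (metis count_mset)
  ultimately show ?thesis using assms(1) unfolding configs_def by simp
qed

lemma configs_binary: "w \<in> configs n \<Longrightarrow> set w \<subseteq> {1,2}"
  by (simp add: configs_def)

lemma binary_nth: "set w \<subseteq> {1,2} \<Longrightarrow> j < length w \<Longrightarrow> w!j = 1 \<or> w!j = 2"
  using nth_mem by fastforce

lemma binary_third:
  assumes "set w \<subseteq> {1,2}" "a < length w" "b < length w" "c < length w" "w!a \<noteq> w!b"
  shows "w!c = w!a \<or> w!c = w!b"
  using binary_nth[OF assms(1)] assms(2-5) by metis

lemma spin_square: "spin x * spin x = 1" by (simp add: spin_def)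

lemma spin_opposite:
  "x \<in> {1,2} \<Longrightarrow> y \<in> {1,2} \<Longrightarrow> x \<noteq> y \<Longrightarrow> spin x + spin y = 0"
  by (auto simp: spin_def)

lemma sum_list_spin:
  "set w \<subseteq> {1,2} \<Longrightarrow> sum_list (map spin w) = int (count_list w 1) - int (count_list w 2)"
  by (induction w) (auto simp: spin_def)

lemma height_Suc: "height w (Suc k) = height w k + spin (w!k)"
  by (simp add: height_def)

lemma height_length: assumes "w \<in> configs n" shows "height w (length w) = 0"
proof -
  have "height w (length w) = sum_list (map spin w)"
    unfolding height_def by (simp add: sum_list_sum_nth atLeast0LessThan)
  also have "\<dots> = 0" using assms sum_list_spin[of w] unfolding configs_def by simp
  finally show ?thesis .
qed

lemma height_flip:
  assumes "Suc i < length w" "k \<noteq> Suc i"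
  shows "height (flip w i) k = height w k"
proof (cases "k \<le> i")
  case True
  then show ?thesis unfolding height_def using assms by (intro sum.cong) (auto simp: nth_flip)
next
  case False
  then obtain m where k: "k = Suc (Suc i) + m" using assms(2)
    by (metis add_Suc_right add_Suc_shift less_Suc_eq not_le_imp_less less_iff_Suc_add)
  have base: "height (flip w i) i = height w i" unfolding height_def using assms by (intro sum.cong) (auto simp: nth_flip)
  have "height (flip w i) (Suc (Suc i) + m) = height w (Suc (Suc i) + m)"
  proof (induction m)
    case 0
    then show ?case using base assms by (simp add: height_Suc nth_flip)
  next
    case (Suc m)
    then show ?case using assms by (simp add: height_Suc nth_flip)
  qed
  then show ?thesis using k by simp
qed

lemma height_skip_pair:
  assumes "set w \<subseteq> {1,2}" "Suc i < length w" "w!i \<noteq> w!Suc i"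
  shows "height w (Suc (Suc i)) = height w i"
proof -
  have "w!i \<in> {1,2}" "w!Suc i \<in> {1,2}" using binary_nth[OF assms(1)] assms(2) by auto
  then have "spin (w!i) + spin (w!Suc i) = 0" using spin_opposite assms(3) by blast
  then show ?thesis by (simp add: height_Suc)
qed

lemma wall_flip_far:
  assumes "Suc i < length w" "k \<noteq> i" "k \<noteq> Suc i" "k \<noteq> Suc (Suc i)"
  shows "wall (flip w i) k = wall w k"
  using assms unfolding wall_def by (auto simp: nth_flip)

lemma wall_flip_middle:
  assumes "Suc i < length w" "w!i \<noteq> w!Suc i"
  shows "\<not> wall (flip w i) (Suc i)" "\<not> wall w (Suc i)"
  using assms unfolding wall_def by (auto simp: nth_flip)

lemma wall_flip_left:
  assumes "set w \<subseteq> {1,2}" "Suc i < length w" "w!i \<noteq> w!Suc i"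
  shows "wall (flip w i) i \<longleftrightarrow> 0 < i \<and> \<not> wall w i"
proof (cases "0 < i")
  case True
  have d: "w!(i-1) = w!i \<or> w!(i-1) = w!Suc i"
    by (rule binary_third[OF assms(1)]) (use assms True in arith)+
  have ne: "i - 1 \<noteq> i" "i - 1 \<noteq> Suc i" using True by arith+
  have f1: "flip w i ! (i-1) = w!(i-1)" using ne assms(2) by (simp add: nth_flip)
  have f2: "flip w i ! i = w!Suc i" using True assms(2) by (simp add: nth_flip)
  have "wall (flip w i) i \<longleftrightarrow> w!(i-1) = w!Suc i" unfolding wall_def using f1 f2 True assms(2) by simp
  moreover have "wall w i \<longleftrightarrow> w!(i-1) = w!i" unfolding wall_def using True assms(2) by simp
  ultimately show ?thesis using d True assms(3) by metis
qed (simp add: wall_def)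

lemma wall_flip_right:
  assumes "set w \<subseteq> {1,2}" "Suc i < length w" "w!i \<noteq> w!Suc i"
  shows "wall (flip w i) (Suc (Suc i)) \<longleftrightarrow> Suc (Suc i) < length w \<and> \<not> wall w (Suc (Suc i))"
proof (cases "Suc (Suc i) < length w")
  case True
  have d: "w!(Suc (Suc i)) = w!i \<or> w!(Suc (Suc i)) = w!Suc i"
    by (rule binary_third[OF assms(1)]) (use assms True in arith)+
  have f1: "flip w i ! Suc i = w!i" using assms(2) by (simp add: nth_flip)
  have f2: "flip w i ! Suc (Suc i) = w!Suc (Suc i)" using assms(2) by (simp add: nth_flip)
  have "wall (flip w i) (Suc (Suc i)) \<longleftrightarrow> w!i = w!Suc (Suc i)" unfolding wall_def using f1 f2 True by simp
  moreover have "wall w (Suc (Suc i)) \<longleftrightarrow> w!Suc i = w!Suc (Suc i)" unfolding wall_def using True by simp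
  ultimately show ?thesis using d True assms(3) by metis
qed (simp add: wall_def)

lemma sum_change_at_two:
  fixes F F' :: "nat \<Rightarrow> int"
  assumes "Suc i < n"
    and "\<And>k. k < n \<Longrightarrow> k \<noteq> i \<Longrightarrow> k \<noteq> Suc (Suc i) \<Longrightarrow> F' k = F k"
  shows "(\<Sum>k<n. F' k) = (\<Sum>k<n. F k) + (F' i - F i)
          + (if Suc (Suc i) < n then F' (Suc (Suc i)) - F (Suc (Suc i)) else 0)"
proof -
  have "(\<Sum>k<n. F' k) - (\<Sum>k<n. F k) = (\<Sum>k<n. F' k - F k)"
    by (simp add: sum_subtractf)
  also have "\<dots> = (\<Sum>k\<in>{..<n} \<inter> {i, Suc (Suc i)}. F' k - F k)"
  proof (rule sum.mono_neutral_right)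
    show "\<forall>k\<in>{..<n} - {..<n} \<inter> {i, Suc (Suc i)}. F' k - F k = 0"
      using assms(2) by auto
  qed auto
  also have "\<dots> = (F' i - F i) + (if Suc (Suc i) < n then F' (Suc (Suc i)) - F (Suc (Suc i)) else 0)"
  proof (cases "Suc (Suc i) < n")
    case True
    then have "{..<n} \<inter> {i, Suc (Suc i)} = {i, Suc (Suc i)}" by auto
    then show ?thesis using True by simp
  next
    case False
    then have "{..<n} \<inter> {i, Suc (Suc i)} = {i}" using assms by auto
    then show ?thesis using False by simp
  qed
  finally show ?thesis by simp
qed

lemma sum_walls_flip:
  fixes g :: "nat list \<Rightarrow> nat \<Rightarrow> int"
  assumes "Suc i < length w" "w!i \<noteq> w!Suc i"
    and "\<And>k. k \<noteq> i \<Longrightarrow> k \<noteq> Suc i \<Longrightarrow> g (flip w i) k = g w k"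
  shows "(\<Sum>k<length w. if wall (flip w i) k then g (flip w i) k else 0)
       = (\<Sum>k<length w. if wall w k then g w k else 0)
         + ((if wall (flip w i) i then g (flip w i) i else 0) - (if wall w i then g w i else 0))
         + (if Suc (Suc i) < length w then
              (if wall (flip w i) (Suc (Suc i)) then g w (Suc (Suc i)) else 0)
              - (if wall w (Suc (Suc i)) then g w (Suc (Suc i)) else 0) else 0)"
proof -
  have "(\<Sum>k<length w. if wall (flip w i) k then g (flip w i) k else 0)
       = (\<Sum>k<length w. if wall w k then g w k else 0)
         + ((if wall (flip w i) i then g (flip w i) i else 0) - (if wall w i then g w i else 0))
         + (if Suc (Suc i) < length w then
              (if wall (flip w i) (Suc (Suc i)) then g (flip w i) (Suc (Suc i)) else 0)
              - (if wall w (Suc (Suc i)) then g w (Suc (Suc i)) else 0) else 0)"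
  proof (rule sum_change_at_two)
    show "Suc i < length w" by fact
    fix k assume k: "k < length w" "k \<noteq> i" "k \<noteq> Suc (Suc i)"
    show "(if wall (flip w i) k then g (flip w i) k else 0) = (if wall w k then g w k else 0)"
    proof (cases "k = Suc i")
      case True then show ?thesis using wall_flip_middle[OF assms(1,2)] by simp
    next
      case False then show ?thesis using wall_flip_far[OF assms(1)] k assms(3) by simp
    qed
  qed
  then show ?thesis using assms(3)[of "Suc (Suc i)"] by simp
qed

lemma mismatches_eq_sum_walls: "int (mismatches w) = (\<Sum>k<length w. if wall w k then 1 else 0)"
proof -
  have e: "{k\<in>{..<length w}. wall w k} = Suc ` {i. Suc i < length w \<and> w!i = w!Suc i}"
  proof (rule set_eqI, rule iffI)
    fix k assume "k \<in> {k\<in>{..<length w}. wall w k}"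
    then have "0 < k" "k < length w" "w!(k-1) = w!k" by (auto simp: wall_def)
    then show "k \<in> Suc ` {i. Suc i < length w \<and> w!i = w!Suc i}"
      by (intro image_eqI[of _ _ "k-1"]) auto
  qed (auto simp: wall_def)
  have "mismatches w = card {k\<in>{..<length w}. wall w k}"
    unfolding mismatches_def e by (simp add: card_image)
  moreover have "(\<Sum>k<length w. if wall w k then 1 else 0) = (\<Sum>k\<in>{k\<in>{..<length w}. wall w k}. (1::int))"
    by (rule sum.inter_filter[symmetric]) simp
  ultimately show ?thesis by simp
qed

lemma mismatches_flip:
  assumes "set w \<subseteq> {1,2}" "Suc i < length w" "w!i \<noteq> w!Suc i"
  shows "int (mismatches (flip w i)) = int (mismatches w)
     + (if 0 < i then (if wall w i then -1 else 1) else 0)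
     + (if Suc (Suc i) < length w then (if wall w (Suc (Suc i)) then -1 else 1) else 0)"
proof -
  have "int (mismatches (flip w i)) = (\<Sum>k<length w. if wall w k then 1 else 0)
         + ((if wall (flip w i) i then 1 else 0) - (if wall w i then 1 else 0))
         + (if Suc (Suc i) < length w then
              (if wall (flip w i) (Suc (Suc i)) then 1 else 0)
              - (if wall w (Suc (Suc i)) then 1 else 0) else 0)"
    unfolding mismatches_eq_sum_walls using sum_walls_flip[OF assms(2,3), of "\<lambda>_ _. 1"] by simp
  then show ?thesis
    unfolding mismatches_eq_sum_walls[of w] wall_flip_left[OF assms] wall_flip_right[OF assms]
    by (cases "0 < i"; cases "wall w i"; cases "Suc (Suc i) < length w"; cases "wall w (Suc (Suc i))")
       (simp_all add: wall_def)
qed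

definition shifts_right :: "nat list \<Rightarrow> nat \<Rightarrow> bool" where
  "shifts_right w i \<longleftrightarrow> Suc i < length w \<and> w!i \<noteq> w!Suc i \<and>
     wall w i \<and> Suc (Suc i) < length w \<and> \<not> wall w (Suc (Suc i))"

definition shifts_left :: "nat list \<Rightarrow> nat \<Rightarrow> bool" where
  "shifts_left w i \<longleftrightarrow> Suc i < length w \<and> w!i \<noteq> w!Suc i \<and>
     0 < i \<and> \<not> wall w i \<and> wall w (Suc (Suc i))"

definition merges :: "nat list \<Rightarrow> nat \<Rightarrow> bool" where
  "merges w i \<longleftrightarrow> Suc i < length w \<and> w!i \<noteq> w!Suc i \<and>
     ((wall w i \<and> wall w (Suc (Suc i))) \<or> (i = 0 \<and> wall w (Suc (Suc i))) \<or>
      (wall w i \<and> \<not> Suc (Suc i) < length w))"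

lemma allowed_flips_iff:
  assumes "set w \<subseteq> {1,2}" "3 \<le> length w"
  shows "i \<in> allowed_flips w \<longleftrightarrow> shifts_right w i \<or> shifts_left w i \<or> merges w i"
proof (cases "Suc i < length w \<and> w!i \<noteq> w!Suc i")
  case False
  then show ?thesis unfolding allowed_flips_def shifts_right_def shifts_left_def merges_def by blast
next
  case True
  then have b: "Suc i < length w" "w!i \<noteq> w!Suc i" by auto
  have "i \<in> allowed_flips w \<longleftrightarrow> int (mismatches (flip w i)) \<le> int (mismatches w)"
    unfolding allowed_flips_def using b by simp
  also have "\<dots> \<longleftrightarrow> (if 0 < i then (if wall w i then -1 else 1) else 0)
     + (if Suc (Suc i) < length w then (if wall w (Suc (Suc i)) then -1 else 1) else 0) \<le> (0::int)"
    unfolding mismatches_flip[OF assms(1) b] by simp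
  also have "\<dots> \<longleftrightarrow> shifts_right w i \<or> shifts_left w i \<or> merges w i"
    unfolding shifts_right_def shifts_left_def merges_def using b assms(2)
    by (cases "0 < i"; cases "wall w i"; cases "Suc (Suc i) < length w"; cases "wall w (Suc (Suc i))")
       (simp_all add: wall_def)
  finally show ?thesis .
qed

lemma flip_classes_disjoint:
  "shifts_right w i \<Longrightarrow> \<not> shifts_left w i"
  "shifts_right w i \<Longrightarrow> \<not> merges w i"
  "shifts_left w i \<Longrightarrow> \<not> merges w i"
  unfolding shifts_right_def shifts_left_def merges_def wall_def by auto

lemma sum_allowed_flips_by_class:
  fixes f :: "nat \<Rightarrow> int"
  assumes "set w \<subseteq> {1,2}" "3 \<le> length w"
  shows "(\<Sum>i\<in>allowed_flips w. f i) = (\<Sum>i<length w. (if shifts_right w i then f i else 0)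
           + (if shifts_left w i then f i else 0) + (if merges w i then f i else 0))"
proof -
  have "allowed_flips w = {i\<in>{..<length w}. shifts_right w i \<or> shifts_left w i \<or> merges w i}"
  proof -
    have "i < length w" if "shifts_right w i \<or> shifts_left w i \<or> merges w i" for i
      using that unfolding shifts_right_def shifts_left_def merges_def by auto
    then show ?thesis using allowed_flips_iff[OF assms] by blast
  qed
  then have "(\<Sum>i\<in>allowed_flips w. f i)
      = (\<Sum>i<length w. if shifts_right w i \<or> shifts_left w i \<or> merges w i then f i else 0)"
    by (simp only: sum.inter_filter finite_lessThan)
  also have "\<dots> = (\<Sum>i<length w. (if shifts_right w i then f i else 0)
           + (if shifts_left w i then f i else 0) + (if merges w i then f i else 0))"
    using flip_classes_disjoint by (intro sum.cong) auto
  finally show ?thesis .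
qed

lemma wall_run_left:
  "wall w k \<Longrightarrow> (\<exists>j. Suc (Suc j) \<le> k \<and> w!j \<noteq> w!Suc j \<and> wall w (Suc (Suc j)))
      \<or> (\<forall>m\<le>k. w!m = w!k)"
proof (induction k)
  case 0 then show ?case by (simp add: wall_def)
next
  case (Suc k)
  have e: "w!k = w!Suc k" "Suc k < length w" using Suc.prems unfolding wall_def by auto
  show ?case
  proof (cases "k = 0")
    case True
    then have "\<forall>m\<le>Suc k. w!m = w!Suc k" using e by (auto simp: le_Suc_eq)
    then show ?thesis by blast
  next
    case False
    show ?thesis
    proof (cases "w!(k-1) = w!k")
      case False2: False
      have "Suc (Suc (k-1)) = Suc k" "Suc (k-1) = k" using False by auto
      then have "Suc (Suc (k-1)) \<le> Suc k \<and> w!(k-1) \<noteq> w!Suc (k-1) \<and> wall w (Suc (Suc (k-1)))"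
        using False2 Suc.prems by simp
      then show ?thesis by blast
    next
      case True
      then have "wall w k" using False e unfolding wall_def by simp
      from Suc.IH[OF this] show ?thesis
      proof
        assume "\<exists>j. Suc (Suc j) \<le> k \<and> w!j \<noteq> w!Suc j \<and> wall w (Suc (Suc j))"
        then show ?thesis by (meson le_Suc_eq)
      next
        assume a: "\<forall>m\<le>k. w!m = w!k"
        have "\<forall>m\<le>Suc k. w!m = w!Suc k"
        proof (intro allI impI)
          fix m assume "m \<le> Suc k"
          then consider "m \<le> k" | "m = Suc k" by linarith
          then show "w!m = w!Suc k" using a e by cases auto
        qed
        then show ?thesis by blast
      qed
    qed
  qed
qed

lemma wall_run_right:
  "wall w k \<Longrightarrow> (\<exists>j. k \<le> j \<and> Suc j < length w \<and> w!j \<noteq> w!Suc j \<and> wall w j)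
      \<or> (\<forall>m. k \<le> m \<longrightarrow> m < length w \<longrightarrow> w!m = w!k)"
proof (induction "length w - k" arbitrary: k rule: less_induct)
  case less
  have k: "0 < k" "k < length w" using less.prems unfolding wall_def by auto
  show ?case
  proof (cases "Suc k < length w")
    case False
    have "m = k" if "k \<le> m" "m < length w" for m using that False by linarith
    then have "\<forall>m. k \<le> m \<longrightarrow> m < length w \<longrightarrow> w!m = w!k" by blast
    then show ?thesis by blast
  next
    case True
    show ?thesis
    proof (cases "w!k = w!Suc k")
      case False
      then show ?thesis using True less.prems by blast
    next
      case eq: True
      then have "wall w (Suc k)" using True unfolding wall_def by simp
      from less.hyps[OF _ this] True have
        "(\<exists>j. Suc k \<le> j \<and> Suc j < length w \<and> w!j \<noteq> w!Suc j \<and> wall w j)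
         \<or> (\<forall>m. Suc k \<le> m \<longrightarrow> m < length w \<longrightarrow> w!m = w!Suc k)" by simp
      then show ?thesis
      proof
        assume "\<exists>j. Suc k \<le> j \<and> Suc j < length w \<and> w!j \<noteq> w!Suc j \<and> wall w j"
        then show ?thesis by (meson Suc_leD)
      next
        assume a: "\<forall>m. Suc k \<le> m \<longrightarrow> m < length w \<longrightarrow> w!m = w!Suc k"
        have "\<forall>m. k \<le> m \<longrightarrow> m < length w \<longrightarrow> w!m = w!k"
        proof (intro allI impI)
          fix m assume m: "k \<le> m" "m < length w"
          then consider "m = k" | "Suc k \<le> m" by linarith
          then show "w!m = w!k"
          proof cases
            case 2
            then have "w!m = w!Suc k" using a m(2) by blast
            then show ?thesis using eq by simp
          qed simp
        qed
        then show ?thesis by blast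
      qed
    qed
  qed
qed

lemma constant_if_no_wall_flip:
  assumes "wall w k" and no: "\<nexists>j. shifts_right w j \<or> shifts_left w j \<or> merges w j"
  shows "set w \<subseteq> {w!k}"
proof -
  have left: "w!m = w!k" if "m \<le> k" for m
    using wall_run_left[OF assms(1)]
  proof
    assume "\<exists>j. Suc (Suc j) \<le> k \<and> w!j \<noteq> w!Suc j \<and> wall w (Suc (Suc j))"
    then obtain j where "w!j \<noteq> w!Suc j" "wall w (Suc (Suc j))" by blast
    then have "shifts_left w j \<or> merges w j"
      unfolding shifts_left_def merges_def by (auto simp: wall_def)
    then show ?thesis using no by blast
  qed (use that in blast)
  have right: "w!m = w!k" if "k \<le> m" "m < length w" for m
    using wall_run_right[OF assms(1)]
  proof
    assume "\<exists>j. k \<le> j \<and> Suc j < length w \<and> w!j \<noteq> w!Suc j \<and> wall w j"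
    then obtain j where "Suc j < length w" "w!j \<noteq> w!Suc j" "wall w j" by blast
    then have "shifts_right w j \<or> merges w j"
      unfolding shifts_right_def merges_def by auto
    then show ?thesis using no by blast
  qed (use that in blast)
  show ?thesis
  proof
    fix x assume "x \<in> set w"
    then obtain m where m: "m < length w" "x = w!m" by (auto simp: in_set_conv_nth)
    show "x \<in> {w!k}"
    proof (cases "m \<le> k")
      case True then show ?thesis using left[OF True] m by simp
    next
      case False then show ?thesis using right[of m] m by simp
    qed
  qed
qed

lemma configs_not_constant:
  assumes "w \<in> configs n" "w \<noteq> []"
  shows "\<not> set w \<subseteq> {c}"
proof
  assume c: "set w \<subseteq> {c}"
  have "count_list w c = length w" "d \<noteq> c \<Longrightarrow> count_list w d = 0" for d
    using c by (induction w) auto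
  moreover have "c = 1 \<or> c = 2" using c assms configs_binary[OF assms(1)] by (cases w) auto
  ultimately show False using assms unfolding configs_def by auto
qed

lemma allowed_flips_nonempty:
  assumes w: "w \<in> configs n" and "3 \<le> length w" and "mismatches w \<noteq> 0"
  shows "allowed_flips w \<noteq> {}"
proof -
  obtain i where "Suc i < length w" "w!i = w!Suc i"
    using \<open>mismatches w \<noteq> 0\<close> unfolding mismatches_def
    by (metis (mono_tags, lifting) Collect_empty_eq card.empty)
  then have "wall w (Suc i)" unfolding wall_def by simp
  moreover have "w \<noteq> []" using assms(2) by auto
  ultimately have "\<exists>j. shifts_right w j \<or> shifts_left w j \<or> merges w j"
    using constant_if_no_wall_flip configs_not_constant[OF w] by blast
  then show ?thesis using allowed_flips_iff[OF configs_binary[OF w] assms(2)] by blast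
qed

text \<open>Moving a wall by two changes profile by a linear function of the position
  (profile_step) whose slope increases along a run of adjacent walls (slope_mono), which is what
  makes the contributions of wall moves telescope.\<close>
definition profile :: "int \<Rightarrow> int \<Rightarrow> int \<Rightarrow> int" where
  "profile n t k = (if 0 < t then -(k^2) else if t = 0 then k*(n-k) else -((n-k)^2))"

definition slope :: "int \<Rightarrow> int \<Rightarrow> int \<Rightarrow> int" where
  "slope n t k = (if 0 < t then 2*k else if t = 0 then 2*k - n else 2*k - 2*n)"

lemma profile_step: "profile n t (k+2) - profile n t k = -2 * slope n t k - 4"
  unfolding profile_def slope_def by (simp add: power2_eq_square algebra_simps)

lemma profile_bounds:
  assumes "0 \<le> k" "k \<le> n"
  shows "-(n^2) \<le> profile n t k \<and> profile n t k \<le> n^2"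
proof -
  have a: "k^2 \<le> n^2" "(n-k)^2 \<le> n^2" using assms by (auto intro!: power_mono)
  have b: "0 \<le> k*(n-k)" "k*(n-k) \<le> n*n" using assms by (auto intro!: mult_mono)
  have c: "0 \<le> k^2" "0 \<le> (n-k)^2" "0 \<le> n^2" by simp_all
  have d: "k*(n-k) \<le> n^2" using b by (simp add: power2_eq_square)
  show ?thesis unfolding profile_def using a b c d by (smt (verit))
qed

lemma slope_bounds:
  assumes "0 \<le> k" "k \<le> n"
  shows "-2*n \<le> slope n t k \<and> slope n t k \<le> 2*n"
  using assms unfolding slope_def by auto

lemma slope_mono: "0 \<le> n \<Longrightarrow> slope n t k \<le> slope n (t+1) (k+1)"
  unfolding slope_def by auto

definition rel_height :: "nat list \<Rightarrow> nat \<Rightarrow> int" where "rel_height w k = spin (w!k) * height w k"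

definition wall_weight :: "nat list \<Rightarrow> nat \<Rightarrow> int" where
  "wall_weight w k = 2 * (int (length w))^2 + profile (int (length w)) (rel_height w k) (int k)"

definition potential :: "nat list \<Rightarrow> int" where
  "potential w = (\<Sum>k<length w. if wall w k then wall_weight w k else 0)"

definition wall_slope :: "nat list \<Rightarrow> nat \<Rightarrow> int" where
  "wall_slope w k = slope (int (length w)) (rel_height w k) (int k)"

lemma wall_weight_ge: assumes "k \<le> length w" shows "(int (length w))^2 \<le> wall_weight w k"
  using profile_bounds[of "int k" "int (length w)" "rel_height w k"] assms unfolding wall_weight_def by simp

lemma wall_weight_le: assumes "k \<le> length w" shows "wall_weight w k \<le> 3 * (int (length w))^2"
  using profile_bounds[of "int k" "int (length w)" "rel_height w k"] assms unfolding wall_weight_def by simp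

lemma potential_bounds:
  shows "0 \<le> potential w" "potential w \<le> 3 * (int (length w))^3"
proof -
  have t: "0 \<le> (if wall w k then wall_weight w k else 0) \<and>
      (if wall w k then wall_weight w k else 0) \<le> 3 * (int (length w))^2"
    if "k < length w" for k
  proof -
    have "(int (length w))^2 \<le> wall_weight w k" "wall_weight w k \<le> 3 * (int (length w))^2"
      using wall_weight_ge[of k w] wall_weight_le[of k w] that by simp_all
    moreover have "0 \<le> (int (length w))^2" by simp
    ultimately show ?thesis by simp
  qed
  show "0 \<le> potential w" unfolding potential_def by (rule sum_nonneg) (use t in auto)
  have "potential w \<le> (\<Sum>k<length w. 3 * (int (length w))^2)" unfolding potential_def by (rule sum_mono) (use t in auto)
  also have "\<dots> = 3 * (int (length w))^3" by (simp add: power3_eq_cube power2_eq_square)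
  finally show "potential w \<le> 3 * (int (length w))^3" .
qed

lemma wall_weight_flip:
  assumes "Suc i < length w" "k \<noteq> i" "k \<noteq> Suc i"
  shows "wall_weight (flip w i) k = wall_weight w k"
  using assms height_flip[OF assms(1)] by (simp add: wall_weight_def rel_height_def nth_flip)

lemma potential_flip:
  assumes "set w \<subseteq> {1,2}" "Suc i < length w" "w!i \<noteq> w!Suc i"
  shows "potential (flip w i) = potential w
     + ((if 0 < i \<and> \<not> wall w i then wall_weight (flip w i) i else 0) - (if wall w i then wall_weight w i else 0))
     + (if Suc (Suc i) < length w then
          (if wall w (Suc (Suc i)) then - wall_weight w (Suc (Suc i)) else wall_weight w (Suc (Suc i))) else 0)"
proof -
  have "potential (flip w i) = potential w
         + ((if wall (flip w i) i then wall_weight (flip w i) i else 0) - (if wall w i then wall_weight w i else 0))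
         + (if Suc (Suc i) < length w then
              (if wall (flip w i) (Suc (Suc i)) then wall_weight w (Suc (Suc i)) else 0)
              - (if wall w (Suc (Suc i)) then wall_weight w (Suc (Suc i)) else 0) else 0)"
    unfolding potential_def length_flip
    by (rule sum_walls_flip[where g=wall_weight, OF assms(2,3)]) (rule wall_weight_flip[OF assms(2)])
  then show ?thesis
    unfolding wall_flip_left[OF assms] wall_flip_right[OF assms]
    by (cases "wall w (Suc (Suc i))"; cases "Suc (Suc i) < length w") (simp_all only: if_True if_False simp_thms)
qed

lemma potential_shift_right:
  assumes "set w \<subseteq> {1,2}" "shifts_right w i"
  shows "potential (flip w i) - potential w = -2 * wall_slope w i - 4"
proof -
  have b: "Suc i < length w" "w!i \<noteq> w!Suc i" "wall w i" "Suc (Suc i) < length w" "\<not> wall w (Suc (Suc i))"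
    using assms(2) unfolding shifts_right_def by auto
  have i0: "0 < i" using b(3) unfolding wall_def by simp
  have "w!(Suc (Suc i)) = w!i \<or> w!(Suc (Suc i)) = w!Suc i"
    by (rule binary_third[OF assms(1)]) (use b in arith)+
  moreover have "w!(Suc (Suc i)) \<noteq> w!Suc i" using b(4,5) unfolding wall_def by simp
  ultimately have l: "w!(Suc (Suc i)) = w!i" by blast
  have t: "rel_height w (Suc (Suc i)) = rel_height w i" unfolding rel_height_def l height_skip_pair[OF assms(1) b(1,2)] ..
  have "potential (flip w i) - potential w = wall_weight w (Suc (Suc i)) - wall_weight w i"
    using potential_flip[OF assms(1) b(1,2)] b by simp
  also have "\<dots> = profile (int (length w)) (rel_height w i) (int i + 2) - profile (int (length w)) (rel_height w i) (int i)"
    unfolding wall_weight_def t by (simp add: add.commute)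
  also have "\<dots> = -2 * wall_slope w i - 4" unfolding wall_slope_def by (rule profile_step)
  finally show ?thesis .
qed

lemma potential_shift_left:
  assumes "set w \<subseteq> {1,2}" "shifts_left w i"
  shows "potential (flip w i) - potential w = 2 * wall_slope w (Suc (Suc i)) - 4"
proof -
  have b: "Suc i < length w" "w!i \<noteq> w!Suc i" "0 < i" "\<not> wall w i" "wall w (Suc (Suc i))"
    using assms(2) unfolding shifts_left_def by auto
  have b4: "Suc (Suc i) < length w" using b(5) unfolding wall_def by simp
  have l: "w!(Suc (Suc i)) = w!Suc i" using b(5) unfolding wall_def by simp
  have t: "spin (w ! Suc i) * height w i = rel_height w (Suc (Suc i))"
    unfolding rel_height_def l height_skip_pair[OF assms(1) b(1,2)] ..
  have ttf: "rel_height (flip w i) i = rel_height w (Suc (Suc i))"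
      unfolding rel_height_def[of "flip w i"] height_flip[OF b(1) n_not_Suc_n] t[symmetric] using b(1) by (simp add: nth_flip)
  have "potential (flip w i) - potential w = wall_weight (flip w i) i - wall_weight w (Suc (Suc i))"
    using potential_flip[OF assms(1) b(1,2)] b b4 by simp
  also have "\<dots> = profile (int (length w)) (rel_height w (Suc (Suc i))) (int i) - profile (int (length w)) (rel_height w (Suc (Suc i))) (int i + 2)"
    unfolding wall_weight_def ttf by (simp add: add.commute)
  also have "\<dots> = 2 * wall_slope w (Suc (Suc i)) - 4"
    using profile_step[of "int (length w)" "rel_height w (Suc (Suc i))" "int i"]
    unfolding wall_slope_def slope_def by auto
  finally show ?thesis .
qed

lemma potential_merge:
  assumes "set w \<subseteq> {1,2}" "merges w i"
  shows "potential (flip w i) - potential w \<le> - ((int (length w))^2)"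
proof -
  have b: "Suc i < length w" "w!i \<noteq> w!Suc i" using assms(2) unfolding merges_def by auto
  have l1: "(int (length w))^2 \<le> wall_weight w i" using b by (intro wall_weight_ge) simp
  have l2: "(int (length w))^2 \<le> wall_weight w (Suc (Suc i))" if "wall w (Suc (Suc i))"
    using that by (intro wall_weight_ge) (simp add: wall_def)
  have l0: "0 \<le> wall_weight w k" if "k \<le> length w" for k
    using wall_weight_ge[OF that] by (smt (verit) zero_le_power2)
  have w2: "Suc (Suc i) < length w" if "wall w (Suc (Suc i))" using that unfolding wall_def by simp
  have e: "potential (flip w i) - potential w
     = ((if 0 < i \<and> \<not> wall w i then wall_weight (flip w i) i else 0) - (if wall w i then wall_weight w i else 0))
     + (if Suc (Suc i) < length w then
          (if wall w (Suc (Suc i)) then - wall_weight w (Suc (Suc i)) else wall_weight w (Suc (Suc i))) else 0)"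
    using potential_flip[OF assms(1) b] by simp
  consider "wall w i" "wall w (Suc (Suc i))" | "i = 0" "wall w (Suc (Suc i))"
    | "wall w i" "\<not> Suc (Suc i) < length w"
    using assms(2) unfolding merges_def by blast
  then show ?thesis
  proof cases
    case 1
    then show ?thesis unfolding e using l1 l2 l0[of "Suc (Suc i)"] w2 by simp
  next
    case 2
    then show ?thesis unfolding e using l2 w2 by (simp add: wall_def)
  next
    case 3
    then show ?thesis unfolding e using l1 by simp
  qed
qed

lemma sum_run_ends_nonpos:
  fixes B P :: "nat \<Rightarrow> int"
  assumes "B 0 = 0" "B n = 0" "\<And>k. B k = 0 \<or> B k = 1"
    and "\<And>k. B k = 1 \<Longrightarrow> B (Suc k) = 1 \<Longrightarrow> P k \<le> P (Suc k)"
  shows "(\<Sum>k<n. P k * B k * (B (Suc k) - B (k - 1))) \<le> 0"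
proof (cases n)
  case 0 then show ?thesis by simp
next
  case (Suc m)
  have s1: "(\<Sum>k<n. P k * B k * B (Suc k)) = (\<Sum>j<m. P j * B j * B (Suc j))"
    using Suc assms(2) by simp
  have s2: "(\<Sum>k<n. P k * B k * B (k - 1)) = (\<Sum>j<m. P (Suc j) * B (Suc j) * B j)"
    unfolding Suc sum.lessThan_Suc_shift using assms(1) by simp
  have "(\<Sum>k<n. P k * B k * (B (Suc k) - B (k - 1)))
      = (\<Sum>k<n. P k * B k * B (Suc k)) - (\<Sum>k<n. P k * B k * B (k - 1))"
    by (simp add: sum_subtractf right_diff_distrib)
  also have "\<dots> = (\<Sum>j<m. B j * B (Suc j) * (P j - P (Suc j)))"
    unfolding s1 s2 by (simp add: sum_subtractf[symmetric] algebra_simps)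
  also have "\<dots> \<le> 0"
  proof (rule sum_nonpos)
    fix j assume "j \<in> {..<m}"
    show "B j * B (Suc j) * (P j - P (Suc j)) \<le> 0"
      using assms(3)[of j] assms(3)[of "Suc j"] assms(4)[of j] by auto
  qed
  finally show ?thesis .
qed

lemma sum_shift_two:
  fixes f :: "nat \<Rightarrow> int"
  shows "(\<Sum>k<n. if 2 \<le> k then f (k - 2) else 0) = (\<Sum>i<n - 2. f i)"
proof (induction n)
  case 0 then show ?case by simp
next
  case (Suc n)
  show ?case
  proof (cases "2 \<le> n")
    case True
    then have "Suc n - 2 = Suc (n - 2)" by simp
    then show ?thesis using Suc True by simp
  next
    case False
    then have "Suc n - 2 = 0" by simp
    moreover have "(\<Sum>k<Suc n. if 2 \<le> k then f (k - 2) else (0::int)) = 0"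
      using False by (intro sum.neutral) auto
    ultimately show ?thesis by simp
  qed
qed

lemma wall_slope_first:
  assumes "wall w 1"
  shows "wall_slope w 1 = 2"
proof -
  have e: "w!0 = w!1" using assms unfolding wall_def by simp
  have "height w 1 = spin (w!0)" by (simp add: height_def)
  then have t: "rel_height w 1 = 1" unfolding rel_height_def e using spin_square[of "w!1"] by simp
  show ?thesis unfolding wall_slope_def t slope_def by simp
qed

lemma wall_slope_last:
  assumes "w \<in> configs m" "wall w (length w - 1)"
  shows "wall_slope w (length w - 1) = -2"
proof -
  define k where "k = length w - 1"
  have k: "0 < k" "Suc k = length w" using assms(2) unfolding wall_def k_def by auto
  have "height w (Suc k) = 0" using height_length[OF assms(1)] k by simp
  then have h: "height w k = - spin (w!k)" by (simp add: height_Suc)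
  have t: "rel_height w k = -1" unfolding rel_height_def h using spin_square[of "w!k"] by simp
  have "wall_slope w k = 2 * int k - 2 * int (length w)" unfolding wall_slope_def t slope_def by simp
  also have "\<dots> = -2" using k by simp
  finally show ?thesis unfolding k_def .
qed

lemma wall_slope_bounds:
  assumes "k \<le> length w"
  shows "-2 * int (length w) \<le> wall_slope w k \<and> wall_slope w k \<le> 2 * int (length w)"
  unfolding wall_slope_def using slope_bounds[of "int k" "int (length w)"] assms by simp

lemma wall_slope_mono:
  assumes "wall w k" "wall w (Suc k)"
  shows "wall_slope w k \<le> wall_slope w (Suc k)"
proof -
  have e: "w!(Suc k) = w!k" using assms(2) unfolding wall_def by simp
  have "rel_height w (Suc k) = rel_height w k + 1"
    unfolding rel_height_def height_Suc e using spin_square[of "w!k"] by (simp add: algebra_simps)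
  then have "wall_slope w (Suc k) = slope (int (length w)) (rel_height w k + 1) (int k + 1)"
    unfolding wall_slope_def by (simp add: add.commute)
  then show ?thesis unfolding wall_slope_def using slope_mono[of "int (length w)" "rel_height w k" "int k"] by simp
qed

lemma shift_right_le_run_end:
  assumes "w \<in> configs m" "k < length w"
  shows "(if shifts_right w k then -2 * wall_slope w k else 0)
     \<le> (if wall w k \<and> \<not> wall w (Suc k) then -2 * wall_slope w k else 0)
       + (if merges w k then 4 * int (length w) else 0)"
proof (cases "wall w k \<and> \<not> wall w (Suc k)")
  case False
  then have "\<not> shifts_right w k" unfolding shifts_right_def wall_def by auto
  moreover have "(if wall w k \<and> \<not> wall w (Suc k) then -2 * wall_slope w k else 0) = 0"
    using False by (rule if_not_P)
  ultimately show ?thesis by simp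
next
  case True
  then have wk: "wall w k" and nk: "\<not> wall w (Suc k)" by auto
  consider "Suc k < length w" | "k = length w - 1" using assms(2) by linarith
  then show ?thesis
  proof cases
    case 1
    then have "w!k \<noteq> w!Suc k" using nk by (simp add: wall_def)
    then have "shifts_right w k \<or> merges w k" using 1 wk unfolding shifts_right_def merges_def by auto
    then show ?thesis using wall_slope_bounds[of k w] assms(2) wk nk by auto
  next
    case 2
    then have "wall_slope w k = -2" using wall_slope_last[OF assms(1)] wk by simp
    then show ?thesis using 2 wk nk by (simp add: shifts_right_def)
  qed
qed

lemma shift_left_le_run_start:
  assumes "k < length w"
  shows "(if 2 \<le> k then (if shifts_left w (k - 2) then 2 * wall_slope w k else 0) else 0)
     \<le> (if wall w k \<and> \<not> wall w (k - 1) then 2 * wall_slope w k else 0)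
       + (if 2 \<le> k then (if merges w (k - 2) then 4 * int (length w) else 0) else 0)"
proof (cases "wall w k \<and> \<not> wall w (k - 1)")
  case False
  have "\<not> shifts_left w (k - 2)" if "2 \<le> k"
  proof
    define i where "i = k - 2"
    have ik: "Suc (Suc i) = k" "Suc i = k - 1" using that unfolding i_def by auto
    assume "shifts_left w (k - 2)"
    then have "wall w (Suc (Suc i)) \<and> \<not> wall w (Suc i)"
      unfolding i_def[symmetric] shifts_left_def wall_def by auto
    then show False using False ik by simp
  qed
  then show ?thesis using False by auto
next
  case True
  then have wk: "wall w k" and nk: "\<not> wall w (k - 1)" by auto
  consider "k = 1" | "2 \<le> k" using wk unfolding wall_def by linarith
  then show ?thesis
  proof cases
    case 1
    then show ?thesis using wall_slope_first wk by simp
  next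
    case 2
    define i where "i = k - 2"
    have ik: "Suc (Suc i) = k" "Suc i = k - 1" using 2 unfolding i_def by auto
    have "\<not> wall w (Suc i)" using nk ik by simp
    moreover have "Suc i < length w" using ik assms by simp
    ultimately have "w!i \<noteq> w!Suc i" by (simp add: wall_def)
    then have "shifts_left w i \<or> merges w i" using wk ik assms unfolding shifts_left_def merges_def by auto
    then show ?thesis using wall_slope_bounds[of k w] assms wk nk 2 unfolding i_def by auto
  qed
qed

lemma sum_shifts_right_le:
  assumes "w \<in> configs m"
  shows "(\<Sum>i<length w. if shifts_right w i then -2 * wall_slope w i else 0)
      \<le> (\<Sum>k<length w. if wall w k \<and> \<not> wall w (Suc k) then -2 * wall_slope w k else 0)
        + (\<Sum>i<length w. if merges w i then 4 * int (length w) else 0)"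
  unfolding sum.distrib[symmetric]
  by (rule sum_mono) (metis shift_right_le_run_end[OF assms] lessThan_iff)

lemma sum_shifts_left_le:
  "(\<Sum>i<length w. if shifts_left w i then 2 * wall_slope w (Suc (Suc i)) else 0)
      \<le> (\<Sum>k<length w. if wall w k \<and> \<not> wall w (k - 1) then 2 * wall_slope w k else 0)
        + (\<Sum>i<length w. if merges w i then 4 * int (length w) else 0)"
proof -
  let ?n = "length w"
  have "(\<Sum>i<?n. if shifts_left w i then 2 * wall_slope w (Suc (Suc i)) else 0)
      = (\<Sum>i<?n - 2. if shifts_left w i then 2 * wall_slope w (Suc (Suc i)) else 0)"
    by (rule sum.mono_neutral_right) (auto simp: shifts_left_def wall_def)
  also have "\<dots> = (\<Sum>k<?n. if 2 \<le> k then (if shifts_left w (k - 2) then 2 * wall_slope w k else 0) else 0)"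
    by (subst sum_shift_two[symmetric]) (rule sum.cong, auto simp: Suc_diff_Suc numeral_2_eq_2)
  also have "\<dots> \<le> (\<Sum>k<?n. if wall w k \<and> \<not> wall w (k - 1) then 2 * wall_slope w k else 0)
        + (\<Sum>k<?n. if 2 \<le> k then (if merges w (k - 2) then 4 * int ?n else 0) else 0)"
    unfolding sum.distrib[symmetric] by (rule sum_mono) (metis shift_left_le_run_start lessThan_iff)
  also have "(\<Sum>k<?n. if 2 \<le> k then (if merges w (k - 2) then 4 * int ?n else 0) else 0)
      = (\<Sum>i<?n - 2. if merges w i then 4 * int ?n else 0)"
    by (rule sum_shift_two)
  also have "\<dots> \<le> (\<Sum>i<?n. if merges w i then 4 * int ?n else 0)"
    by (rule sum_mono2) auto
  finally show ?thesis by simp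
qed

lemma sum_wall_run_ends_nonpos:
  "(\<Sum>k<length w. if wall w k \<and> \<not> wall w (k - 1) then 2 * wall_slope w k else 0)
    + (\<Sum>k<length w. if wall w k \<and> \<not> wall w (Suc k) then -2 * wall_slope w k else 0) \<le> 0"
proof -
  define B where "B k = (if wall w k then 1 else 0 :: int)" for k
  have "(\<Sum>k<length w. wall_slope w k * B k * (B (Suc k) - B (k - 1))) \<le> 0"
    by (rule sum_run_ends_nonpos) (auto simp: B_def wall_def intro: wall_slope_mono split: if_splits)
  moreover have "(\<Sum>k<length w. if wall w k \<and> \<not> wall w (k - 1) then 2 * wall_slope w k else 0)
    + (\<Sum>k<length w. if wall w k \<and> \<not> wall w (Suc k) then -2 * wall_slope w k else 0)
    = 2 * (\<Sum>k<length w. wall_slope w k * B k * (B (Suc k) - B (k - 1)))"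
    unfolding sum.distrib[symmetric] sum_distrib_left by (rule sum.cong) (auto simp: B_def)
  ultimately show ?thesis by simp
qed

lemma potential_drift:
  assumes cw: "w \<in> configs m" and n9: "9 \<le> length w"
  shows "(\<Sum>i\<in>allowed_flips w. potential (flip w i)) \<le> int (card (allowed_flips w)) * (potential w - 4)"
proof -
  define n where "n = length w"
  define D where "D i = potential (flip w i) - potential w + 4" for i
  have bin: "set w \<subseteq> {1,2}" using configs_binary[OF cw] .
  have "(\<Sum>i\<in>allowed_flips w. D i) = (\<Sum>i<n. (if shifts_right w i then D i else 0)
           + (if shifts_left w i then D i else 0) + (if merges w i then D i else 0))"
    unfolding n_def using sum_allowed_flips_by_class[OF bin] n9 by simp
  also have "\<dots> \<le> (\<Sum>i<n. (if shifts_right w i then -2 * wall_slope w i else 0)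
           + (if shifts_left w i then 2 * wall_slope w (Suc (Suc i)) else 0)
           + (if merges w i then 4 - (int n)^2 else 0))"
    using potential_shift_right[OF bin] potential_shift_left[OF bin] potential_merge[OF bin]
    unfolding D_def n_def by (intro sum_mono) force
  also have "\<dots> \<le> 2 * (\<Sum>i<n. if merges w i then 4 * int n else 0)
           + (\<Sum>i<n. if merges w i then 4 - (int n)^2 else 0)"
    using sum_shifts_right_le[OF cw] sum_shifts_left_le[of w] sum_wall_run_ends_nonpos[of w]
    unfolding n_def sum.distrib by linarith
  also have "\<dots> = (\<Sum>i<n. if merges w i then 8 * int n + 4 - (int n)^2 else 0)"
    unfolding sum_distrib_left sum.distrib[symmetric] by (rule sum.cong) auto
  also have "\<dots> \<le> 0"
  proof (rule sum_nonpos)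
    have "9 * int n \<le> int n * int n" using n9 n_def by (intro mult_right_mono) auto
    then show "(if merges w i then 8 * int n + 4 - (int n)^2 else 0) \<le> 0" for i
      using n9 n_def by (simp add: power2_eq_square)
  qed
  finally show ?thesis
    unfolding D_def by (simp add: sum.distrib sum_subtractf algebra_simps)
qed

definition unconverged :: "nat list list \<Rightarrow> bool" where
  "unconverged p = (\<forall>v\<in>set p. mismatches v \<noteq> 0)"

lemma finite_allowed_flips: "finite (allowed_flips v)"
  by (rule finite_subset[of _ "{..<length v}"]) (auto simp: allowed_flips_def)

lemma set_cool_step:
  assumes "mismatches v \<noteq> 0" "allowed_flips v \<noteq> {}"
  shows "set_pmf (cool_step v) = flip v ` allowed_flips v"
  using assms finite_allowed_flips by (simp add: cool_step_def)

lemma set_cool_step_converged: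
  assumes "mismatches v = 0"
  shows "set_pmf (cool_step v) = {v}"
  using assms by (simp add: cool_step_def)

lemma surv_eq_sum:
  assumes "finite (set_pmf (traj t w))"
  shows "surv w t = (\<Sum>p\<in>set_pmf (traj t w). if unconverged p then pmf (traj t w) p else 0)"
proof -
  have "surv w t = measure_pmf.prob (traj t w) ({p. unconverged p} \<inter> set_pmf (traj t w))"
    unfolding surv_def unconverged_def by (simp add: measure_Int_set_pmf)
  also have "\<dots> = sum (pmf (traj t w)) ({p. unconverged p} \<inter> set_pmf (traj t w))"
    using assms by (intro measure_measure_pmf_finite) auto
  finally show ?thesis using assms by (simp add: sum.If_cases Int_commute)
qed

locale cooling_lyapunov =
  fixes S :: "nat list set" and \<Psi> :: "nat list \<Rightarrow> real"
  assumes flip_closed: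
      "\<And>v i. v \<in> S \<Longrightarrow> mismatches v \<noteq> 0 \<Longrightarrow> i \<in> allowed_flips v \<Longrightarrow> flip v i \<in> S"
    and allowed_nonempty: "\<And>v. v \<in> S \<Longrightarrow> mismatches v \<noteq> 0 \<Longrightarrow> allowed_flips v \<noteq> {}"
    and drift: "\<And>v. v \<in> S \<Longrightarrow> mismatches v \<noteq> 0 \<Longrightarrow>
        (\<Sum>i\<in>allowed_flips v. \<Psi> (flip v i)) \<le> real (card (allowed_flips v)) * (\<Psi> v - 1)"
    and nonneg: "\<And>v. v \<in> S \<Longrightarrow> 0 \<le> \<Psi> v"
begin

lemma cool_step_support:
  assumes "v \<in> S"
  shows "finite (set_pmf (cool_step v))" "set_pmf (cool_step v) \<subseteq> S"
proof (atomize (full), cases "mismatches v = 0")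
  case False
  then show "finite (set_pmf (cool_step v)) \<and> set_pmf (cool_step v) \<subseteq> S"
    using assms allowed_nonempty flip_closed by (auto simp: set_cool_step finite_allowed_flips)
qed (use assms in \<open>simp add: set_cool_step_converged\<close>)

lemma traj_support:
  assumes "w \<in> S"
  shows "finite (set_pmf (traj t w)) \<and> (\<forall>p\<in>set_pmf (traj t w). p \<noteq> [] \<and> set p \<subseteq> S)"
proof (induction t)
  case 0
  then show ?case using assms by simp
next
  case (Suc t)
  have "set_pmf (traj (Suc t) w) = (\<Union>p\<in>set_pmf (traj t w). (\<lambda>v. p @ [v]) ` set_pmf (cool_step (last p)))"
    by (simp add: set_bind_pmf)
  moreover have "last p \<in> S" if "p \<in> set_pmf (traj t w)" for p
    using Suc.IH that last_in_set by blast
  ultimately show ?case using Suc.IH cool_step_support by fastforce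
qed

lemma last_traj_in:
  assumes "w \<in> S" "p \<in> set_pmf (traj t w)"
  shows "last p \<in> S"
  using traj_support[OF assms(1), of t] assms(2) last_in_set by blast

lemma expectation_cool_step_le:
  assumes "v \<in> S" "mismatches v \<noteq> 0" and g: "\<And>u. u \<in> S \<Longrightarrow> g u \<le> \<Psi> u"
  shows "measure_pmf.expectation (cool_step v) g \<le> \<Psi> v - 1"
proof -
  define A where "A = allowed_flips v"
  have A: "A \<noteq> {}" "finite A" using assms allowed_nonempty finite_allowed_flips unfolding A_def by auto
  have "measure_pmf.expectation (cool_step v) g = (\<Sum>i\<in>A. g (flip v i)) / real (card A)"
    using assms(2) A unfolding cool_step_def A_def by (simp add: integral_map_pmf integral_pmf_of_set)
  also have "\<dots> \<le> (\<Sum>i\<in>A. \<Psi> (flip v i)) / real (card A)"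
    using g flip_closed[OF assms(1,2)] unfolding A_def by (intro divide_right_mono sum_mono) auto
  also have "\<dots> \<le> \<Psi> v - 1"
    using drift[OF assms(1,2)] A by (simp add: A_def divide_le_eq card_gt_0_iff mult.commute)
  finally show ?thesis .
qed

definition stopped_value :: "nat list list \<Rightarrow> real" where
  "stopped_value p = (if unconverged p then \<Psi> (last p) else 0)"

lemma expectation_traj_eq_sum:
  assumes "w \<in> S"
  shows "measure_pmf.expectation (traj t w) stopped_value
    = (\<Sum>p\<in>set_pmf (traj t w). pmf (traj t w) p * stopped_value p)"
  using traj_support[OF assms] by (subst integral_measure_pmf_real) (auto simp: mult.commute)

lemma expectation_traj_nonneg:
  assumes "w \<in> S"
  shows "0 \<le> measure_pmf.expectation (traj t w) stopped_value"
  unfolding expectation_traj_eq_sum[OF assms] using nonneg[OF last_traj_in[OF assms]]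
  by (intro sum_nonneg) (simp add: stopped_value_def)

lemma expectation_extend_le:
  assumes "w \<in> S" "p \<in> set_pmf (traj t w)"
  shows "measure_pmf.expectation (cool_step (last p)) (\<lambda>v. stopped_value (p @ [v]))
      \<le> (if unconverged p then \<Psi> (last p) - 1 else 0)"
proof (cases "unconverged p")
  case True
  have "p \<noteq> []" "set p \<subseteq> S" using traj_support[OF assms(1)] assms(2) by auto
  then have "last p \<in> S" "mismatches (last p) \<noteq> 0" using True by (auto simp: unconverged_def)
  moreover have "stopped_value (p @ [u]) \<le> \<Psi> u" if "u \<in> S" for u
    using nonneg[OF that] by (simp add: stopped_value_def)
  ultimately show ?thesis using True expectation_cool_step_le by simp
next
  case False
  then have "(\<lambda>v. stopped_value (p @ [v])) = (\<lambda>v. 0)"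
    by (intro ext) (auto simp: stopped_value_def unconverged_def)
  then show ?thesis using False by simp
qed

lemma surv_le_expectation_decrease:
  assumes "w \<in> S"
  shows "surv w t + measure_pmf.expectation (traj (Suc t) w) stopped_value
      \<le> measure_pmf.expectation (traj t w) stopped_value"
proof -
  let ?P = "set_pmf (traj t w)"
  have fin: "finite ?P" using traj_support[OF assms] by auto
  note last = last_traj_in[OF assms]
  have "measure_pmf.expectation (traj (Suc t) w) stopped_value = (\<Sum>p\<in>?P. pmf (traj t w) p *\<^sub>R
      measure_pmf.expectation (map_pmf (\<lambda>v. p @ [v]) (cool_step (last p))) stopped_value)"
    unfolding traj.simps using fin last cool_step_support by (intro pmf_expectation_bind) auto
  also have "\<dots> \<le> (\<Sum>p\<in>?P. pmf (traj t w) p * (if unconverged p then \<Psi> (last p) - 1 else 0))"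
    using expectation_extend_le[OF assms]
    by (auto simp: integral_map_pmf intro!: sum_mono mult_left_mono)
  also have "\<dots> = measure_pmf.expectation (traj t w) stopped_value - surv w t"
    unfolding expectation_traj_eq_sum[OF assms] surv_eq_sum[OF fin] stopped_value_def
    by (simp add: sum_subtractf[symmetric] algebra_simps if_distrib cong: if_cong)
  finally show ?thesis by simp
qed

lemma exp_conv_time_le:
  assumes "w \<in> S"
  shows "exp_conv_time w \<le> ennreal (\<Psi> w)"
proof -
  have partial: "(\<Sum>s<t. surv w s) + measure_pmf.expectation (traj t w) stopped_value \<le> \<Psi> w" for t
  proof (induction t)
    case 0
    then show ?case using nonneg[OF assms] by (simp add: stopped_value_def unconverged_def)
  next
    case (Suc t)
    then show ?case using surv_le_expectation_decrease[OF assms, of t] by simp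
  qed
  have "(\<Sum>s<t. ennreal (surv w s)) \<le> ennreal (\<Psi> w)" for t
  proof -
    have "(\<Sum>s<t. ennreal (surv w s)) = ennreal (\<Sum>s<t. surv w s)"
      by (simp add: sum_ennreal surv_def)
    also have "\<dots> \<le> ennreal (\<Psi> w)"
      using partial[of t] expectation_traj_nonneg[OF assms, of t] by (intro ennreal_leI) linarith
    finally show ?thesis .
  qed
  then show ?thesis
    unfolding exp_conv_time_def suminf_eq_SUP by (rule SUP_least)
qed

end

lemma exp_conv_time_le_potential:
  assumes n: "9 \<le> n" and w: "w \<in> configs n"
  shows "exp_conv_time w \<le> ennreal (real_of_int (potential w) / 4)"
proof -
  have len: "length v = n" if "v \<in> configs n" for v using that unfolding configs_def by simp
  interpret cooling_lyapunov "configs n" "\<lambda>v. real_of_int (potential v) / 4"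
  proof
    fix v i assume "v \<in> configs n" "i \<in> allowed_flips v"
    then show "flip v i \<in> configs n" using flip_in_configs by (auto simp: allowed_flips_def)
  next
    fix v assume "v \<in> configs n" "mismatches v \<noteq> 0"
    then show "allowed_flips v \<noteq> {}" using allowed_flips_nonempty len n by simp
  next
    fix v assume v: "v \<in> configs n"
    have "real_of_int (\<Sum>i\<in>allowed_flips v. potential (flip v i))
        \<le> real_of_int (int (card (allowed_flips v)) * (potential v - 4))"
      using potential_drift[OF v] len[OF v] n by (simp only: of_int_le_iff)
    then show "(\<Sum>i\<in>allowed_flips v. real_of_int (potential (flip v i)) / 4)
        \<le> real (card (allowed_flips v)) * (real_of_int (potential v) / 4 - 1)"
      by (simp add: sum_divide_distrib[symmetric] algebra_simps)
  next
    show "0 \<le> real_of_int (potential v) / 4" for v using potential_bounds(1)[of v] by simp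
  qed
  show ?thesis using exp_conv_time_le[OF w] .
qed

theorem theorem1:
  shows "\<exists>C N. \<forall>n\<ge>N. \<forall>w\<in>configs n.
           exp_conv_time w \<le> ennreal (C * real n ^ 3)"
proof (intro exI allI impI ballI)
  fix n w assume n: "9 \<le> n" and w: "w \<in> configs n"
  have "potential w \<le> 3 * int n ^ 3"
    using potential_bounds(2)[of w] w by (simp add: configs_def)
  then have "real_of_int (potential w) \<le> real_of_int (3 * int n ^ 3)"
    by (simp only: of_int_le_iff)
  moreover have "0 \<le> real n ^ 3" by simp
  ultimately have "real_of_int (potential w) / 4 \<le> 1 * real n ^ 3"
    by (simp only: of_int_mult of_int_power of_int_of_nat_eq of_int_numeral)
  then show "exp_conv_time w \<le> ennreal (1 * real n ^ 3)"
    using exp_conv_time_le_potential[OF n w] by (meson ennreal_leI order_trans)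
qed

end
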